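(* Let $S,T$ be totally ordered sets and $M\colon S\times T\to\mathbf{Vec}$ pointwise finite-dimensional such that for all $x\le x'$ in $S$, $y\le y'$ in $T$, with $a=(x,y),b=(x,y'),c=(x',y),d=(x',y')$, the sequence $0\to M_a\to M_b\oplus M_c\to M_d\to0$ (maps $(M(a\le b),M(a\le c))$ and $M(b\le d)-M(c\le d)$) is exact. Then $\ker M^{\rightarrow}\cap\ker M^{\uparrow}=0$ and $M=\operatorname{Im}M^{\leftarrow}+\operatorname{Im}M^{\downarrow}$.
   Context: For $(p_1,p_2)\in S\times T$ define subspaces of $M_{(p_1,p_2)}$: $\operatorname{Im}M^{\leftarrow}_{(p_1,p_2)}=\bigcap_{q\le p_1}\operatorname{Im}M((q,p_2)\le(p_1,p_2))$, $\operatorname{Im}M^{\downarrow}_{(p_1,p_2)}=\bigcap_{q\le p_2}\operatorname{Im}M((p_1,q)\le(p_1,p_2))$, $\ker M^{\rightarrow}_{(p_1,p_2)}=\bigcup_{q\ge p_1}\ker M((p_1,p_2)\le(q,p_2))$, $\ker M^{\uparrow}_{(p_1,p_2)}=\bigcup_{q\ge p_2}\ker M((p_1,p_2)\le(p_1,q))$. For pointwise finite-dimensional $M$ these are submodules of $M$; $\operatorname{Im}M^{\leftarrow}+\operatorname{Im}M^{\downarrow}$ is the pointwise sum. *)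

theory Defs
  imports Complex_Main
begin

definition ple :: "('s::linorder \<times> 't::linorder) \<Rightarrow> 's \<times> 't \<Rightarrow> bool" where
  "ple p q \<longleftrightarrow> fst p \<le> fst q \<and> snd p \<le> snd q"

text \<open>All stalks V p are subspaces of one ambient k-vector space (scale), and
  F p q is the structure map M(p \<le> q), acting on V p.\<close>
definition pfd_module ::
  "('k::field \<Rightarrow> 'v::ab_group_add \<Rightarrow> 'v) \<Rightarrow> ('s::linorder \<times> 't::linorder \<Rightarrow> 'v set)
   \<Rightarrow> ('s \<times> 't \<Rightarrow> 's \<times> 't \<Rightarrow> 'v \<Rightarrow> 'v) \<Rightarrow> bool" where
  "pfd_module scale V F \<longleftrightarrow>
     vector_space scale \<and>
     (\<forall>p. module.subspace scale (V p)) \<and>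
     (\<forall>p. \<exists>B. finite B \<and> B \<subseteq> V p \<and> V p \<subseteq> module.span scale B) \<and>
     (\<forall>p q. ple p q \<longrightarrow>
        (\<forall>x\<in>V p. F p q x \<in> V q) \<and>
        (\<forall>x\<in>V p. \<forall>y\<in>V p. F p q (x + y) = F p q x + F p q y) \<and>
        (\<forall>c. \<forall>x\<in>V p. F p q (scale c x) = scale c (F p q x))) \<and>
     (\<forall>p. \<forall>x\<in>V p. F p p x = x) \<and>
     (\<forall>p q r. ple p q \<longrightarrow> ple q r \<longrightarrow> (\<forall>x\<in>V p. F q r (F p q x) = F p r x))"

text \<open>Exactness of 0 -> M_a -> M_b (+) M_c -> M_d -> 0 for a=(x,y), b=(x,y'),
  c=(x',y), d=(x',y'), with maps u |-> (M(a<=b) u, M(a<=c) u) and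
  (v,w) |-> M(b<=d) v - M(c<=d) w.\<close>
definition square_exact ::
  "('s::linorder \<times> 't::linorder \<Rightarrow> 'v::ab_group_add set)
   \<Rightarrow> ('s \<times> 't \<Rightarrow> 's \<times> 't \<Rightarrow> 'v \<Rightarrow> 'v) \<Rightarrow> 's \<Rightarrow> 's \<Rightarrow> 't \<Rightarrow> 't \<Rightarrow> bool" where
  "square_exact V F x x' y y' \<longleftrightarrow>
     (let a = (x, y); b = (x, y'); c = (x', y); d = (x', y') in
       (\<forall>u\<in>V a. F a b u = 0 \<and> F a c u = 0 \<longrightarrow> u = 0) \<and>
       (\<forall>v\<in>V b. \<forall>w\<in>V c. F b d v - F c d w = 0 \<longleftrightarrow>
            (\<exists>u\<in>V a. v = F a b u \<and> w = F a c u)) \<and>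
       (\<forall>z\<in>V d. \<exists>v\<in>V b. \<exists>w\<in>V c. z = F b d v - F c d w))"

definition Im_left where
  "Im_left V F p = (\<Inter>q\<in>{q. q \<le> fst p}. F (q, snd p) p ` V (q, snd p))"

definition Im_down where
  "Im_down V F p = (\<Inter>q\<in>{q. q \<le> snd p}. F (fst p, q) p ` V (fst p, q))"

definition ker_right where
  "ker_right V F p = (\<Union>q\<in>{q. fst p \<le> q}. {v\<in>V p. F p (q, snd p) v = 0})"

definition ker_up where
  "ker_up V F p = (\<Union>q\<in>{q. snd p \<le> q}. {v\<in>V p. F p (fst p, q) v = 0})"

end

theory Submission
  imports Defs
begin

text \<open>Along a horizontal (or vertical) line ending at p, the images of the structure maps into the
  finite-dimensional space M_p form a chain of subspaces, so their intersection is attained at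
  some q0: Im_left p is the image of M((q0, y) \<le> p), and likewise Im_down p that of M((x, r0) \<le> p).
  Exactness of the square with corners (q0, r0) and p = (x, y) at M_p then writes every
  element of M_p as a sum of an element of each image. Injectivity of the first map of the same
  exact sequences says that a vector killed both to the right and upwards is zero.\<close>

lemma (in vector_space) subspace_superset_eq_if_dim_le:
  assumes "subspace S" "S \<subseteq> T" "T \<subseteq> span B" "finite B" "dim T \<le> dim S"
  shows "T \<subseteq> S"
proof -
  obtain BS where BS: "BS \<subseteq> S" "independent BS" "S \<subseteq> span BS" "card BS = dim S"
    by (rule basis_exists)
  obtain BT where BT: "BS \<subseteq> BT" "BT \<subseteq> T" "independent BT" "T \<subseteq> span BT"
    using maximal_independent_subset_extend[of BS T] BS assms(2) by blast
  have card_BT: "card BT = dim T" using basis_card_eq_dim BT by blast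
  have "finite BT" using independent_span_bound[OF assms(4) BT(3)] BT(2) assms(3) by blast
  then have "BS = BT" using card_seteq[OF _ BT(1)] card_BT BS(4) assms(5) by simp
  then show ?thesis using BT(4) span_minimal[OF BS(1) assms(1)] by blast
qed

lemma (in vector_space) Inter_chain_subspaces_attained:
  assumes subspace: "\<And>i. i \<in> I \<Longrightarrow> subspace (S i)"
    and bounded: "\<And>i. i \<in> I \<Longrightarrow> S i \<subseteq> span B" and "finite B"
    and chain: "\<And>i j. i \<in> I \<Longrightarrow> j \<in> I \<Longrightarrow> S i \<subseteq> S j \<or> S j \<subseteq> S i"
    and "I \<noteq> {}"
  shows "\<exists>i0\<in>I. (\<Inter>i\<in>I. S i) = S i0"
proof -
  obtain i0 where i0: "i0 \<in> I" and dim_min: "\<And>i. i \<in> I \<Longrightarrow> dim (S i0) \<le> dim (S i)"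
    using ex_has_least_nat[of "\<lambda>i. i \<in> I" _ "\<lambda>i. dim (S i)"] \<open>I \<noteq> {}\<close> by blast
  have "S i0 \<subseteq> S i" if "i \<in> I" for i
  proof (cases "S i \<subseteq> S i0")
    case True
    then show ?thesis
      using subspace_superset_eq_if_dim_le[OF subspace[OF that] _ bounded[OF i0] \<open>finite B\<close>]
        dim_min[OF that] by blast
  qed (use chain[OF i0 that] in blast)
  then show ?thesis using i0 by blast
qed

locale pfd_persistence_module =
  fixes scale :: "'k::field \<Rightarrow> 'v::ab_group_add \<Rightarrow> 'v"
    and V :: "'s::linorder \<times> 't::linorder \<Rightarrow> 'v set"
    and F :: "'s \<times> 't \<Rightarrow> 's \<times> 't \<Rightarrow> 'v \<Rightarrow> 'v"
  assumes pfd_module: "pfd_module scale V F"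
begin

sublocale vector_space scale
  using pfd_module unfolding pfd_module_def by blast

lemma subspace_stalk: "subspace (V p)"
  using pfd_module unfolding pfd_module_def by blast

lemma zero_in_stalk: "0 \<in> V p"
  using subspace_stalk subspace_0 by blast

lemma stalk_finite_span: "\<exists>B. finite B \<and> B \<subseteq> V p \<and> V p \<subseteq> span B"
  using pfd_module unfolding pfd_module_def by blast

lemma map_in_stalk: "ple p q \<Longrightarrow> x \<in> V p \<Longrightarrow> F p q x \<in> V q"
  using pfd_module unfolding pfd_module_def by blast

lemma map_add: "ple p q \<Longrightarrow> x \<in> V p \<Longrightarrow> y \<in> V p \<Longrightarrow> F p q (x + y) = F p q x + F p q y"
  using pfd_module unfolding pfd_module_def by blast

lemma map_scale: "ple p q \<Longrightarrow> x \<in> V p \<Longrightarrow> F p q (scale c x) = scale c (F p q x)"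
  using pfd_module unfolding pfd_module_def by blast

lemma map_id: "x \<in> V p \<Longrightarrow> F p p x = x"
  using pfd_module unfolding pfd_module_def by blast

lemma map_comp: "ple p q \<Longrightarrow> ple q r \<Longrightarrow> x \<in> V p \<Longrightarrow> F q r (F p q x) = F p r x"
  using pfd_module unfolding pfd_module_def by blast

lemma map_zero: "ple p q \<Longrightarrow> F p q 0 = 0"
  using map_add[of p q 0 0] zero_in_stalk by simp

lemma map_minus: "ple p q \<Longrightarrow> x \<in> V p \<Longrightarrow> F p q (- x) = - F p q x"
  using map_add[of p q x "- x"] map_zero subspace_neg[OF subspace_stalk] minus_unique
  by fastforce

lemma subspace_image:
  assumes "ple p q"
  shows "subspace (F p q ` V p)"
  unfolding subspace_def
proof (intro conjI ballI allI)
  show "0 \<in> F p q ` V p"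
    using map_zero[OF assms] zero_in_stalk by (metis image_eqI)
next
  fix x y assume "x \<in> F p q ` V p" "y \<in> F p q ` V p"
  then obtain a b where "a \<in> V p" "b \<in> V p" "x = F p q a" "y = F p q b" by blast
  then show "x + y \<in> F p q ` V p"
    using map_add[OF assms] subspace_stalk subspace_add by (metis image_eqI)
next
  fix c x assume "x \<in> F p q ` V p"
  then obtain a where "a \<in> V p" "x = F p q a" by blast
  then show "scale c x \<in> F p q ` V p"
    using map_scale[OF assms] subspace_stalk subspace_scale by (metis image_eqI)
qed

lemma image_subset_stalk: "ple p q \<Longrightarrow> F p q ` V p \<subseteq> V q"
  using map_in_stalk by blast

lemma image_mono: "ple p q \<Longrightarrow> ple q r \<Longrightarrow> F p r ` V p \<subseteq> F q r ` V q"
  using map_comp map_in_stalk by (metis image_eqI image_subsetI)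

lemma Inter_images_along_chain_attained:
  fixes pt :: "'i \<Rightarrow> 's \<times> 't"
  assumes "I \<noteq> {}" and below: "\<And>i. i \<in> I \<Longrightarrow> ple (pt i) p"
    and chain: "\<And>i j. i \<in> I \<Longrightarrow> j \<in> I \<Longrightarrow> ple (pt i) (pt j) \<or> ple (pt j) (pt i)"
  shows "\<exists>i0\<in>I. (\<Inter>i\<in>I. F (pt i) p ` V (pt i)) = F (pt i0) p ` V (pt i0)"
proof -
  obtain B where B: "finite B" "V p \<subseteq> span B" using stalk_finite_span by blast
  show ?thesis
  proof (rule Inter_chain_subspaces_attained[OF _ _ B(1) _ \<open>I \<noteq> {}\<close>])
    fix i assume "i \<in> I"
    then show "subspace (F (pt i) p ` V (pt i))" using subspace_image below by blast
    show "F (pt i) p ` V (pt i) \<subseteq> span B" using image_subset_stalk below \<open>i \<in> I\<close> B(2) by blast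
    fix j assume "j \<in> I"
    then show "F (pt i) p ` V (pt i) \<subseteq> F (pt j) p ` V (pt j) \<or>
               F (pt j) p ` V (pt j) \<subseteq> F (pt i) p ` V (pt i)"
      using chain[OF \<open>i \<in> I\<close>] image_mono below \<open>i \<in> I\<close> by blast
  qed
qed

lemma Im_left_attained: "\<exists>q0 \<le> fst p. Im_left V F p = F (q0, snd p) p ` V (q0, snd p)"
  using Inter_images_along_chain_attained[of "{q. q \<le> fst p}" "\<lambda>q. (q, snd p)" p]
  unfolding Im_left_def ple_def by (auto simp: linear)

lemma Im_down_attained: "\<exists>r0 \<le> snd p. Im_down V F p = F (fst p, r0) p ` V (fst p, r0)"
  using Inter_images_along_chain_attained[of "{r. r \<le> snd p}" "\<lambda>r. (fst p, r)" p]
  unfolding Im_down_def ple_def by (auto simp: linear)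

lemma Im_left_subset_stalk: "Im_left V F p \<subseteq> V p"
  unfolding Im_left_def using map_id by force

lemma Im_down_subset_stalk: "Im_down V F p \<subseteq> V p"
  unfolding Im_down_def using map_id by force

lemma zero_in_ker_right_ker_up: "0 \<in> ker_right V F p \<inter> ker_up V F p"
proof -
  have "F p (fst p, snd p) 0 = 0" using map_id[OF zero_in_stalk] by simp
  then show ?thesis
    unfolding ker_right_def ker_up_def using zero_in_stalk[of p]
    by (auto intro!: UN_I[of "fst p"] UN_I[of "snd p"])
qed

context
  assumes squares_exact: "\<And>x x' y y'. x \<le> x' \<Longrightarrow> y \<le> y' \<Longrightarrow> square_exact V F x x' y y'"
begin

lemma ker_right_inter_ker_up: "ker_right V F p \<inter> ker_up V F p = {0}"
proof -
  have "v = 0" if "v \<in> ker_right V F p \<inter> ker_up V F p" for v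
  proof -
    obtain x' y' where v: "v \<in> V p" "fst p \<le> x'" "F p (x', snd p) v = 0"
      "snd p \<le> y'" "F p (fst p, y') v = 0"
      using \<open>v \<in> ker_right V F p \<inter> ker_up V F p\<close> unfolding ker_right_def ker_up_def by blast
    then show "v = 0"
      using squares_exact[of "fst p" x' "snd p" y'] unfolding square_exact_def Let_def by simp
  qed
  then show ?thesis using zero_in_ker_right_ker_up by blast
qed

lemma stalk_eq_Im_left_plus_Im_down:
  "V p = {u + w |u w. u \<in> Im_left V F p \<and> w \<in> Im_down V F p}"
proof
  obtain x y where p: "p = (x, y)" by (cases p)
  obtain q0 where q0: "q0 \<le> x" "Im_left V F p = F (q0, y) p ` V (q0, y)"
    using Im_left_attained[of p] unfolding p by auto
  obtain r0 where r0: "r0 \<le> y" "Im_down V F p = F (x, r0) p ` V (x, r0)"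
    using Im_down_attained[of p] unfolding p by auto
  have ple: "ple (q0, y) p" "ple (x, r0) p" using q0 r0 unfolding p ple_def by auto
  show "V p \<subseteq> {u + w |u w. u \<in> Im_left V F p \<and> w \<in> Im_down V F p}"
  proof
    fix z assume "z \<in> V p"
    then obtain v w where vw: "v \<in> V (q0, y)" "w \<in> V (x, r0)"
        "z = F (q0, y) p v - F (x, r0) p w"
      using squares_exact[OF q0(1) r0(1)] unfolding square_exact_def Let_def p by blast
    then have "z = F (q0, y) p v + F (x, r0) p (- w)"
      using map_minus[OF ple(2)] by simp
    moreover have "- w \<in> V (x, r0)" using vw(2) subspace_stalk subspace_neg by blast
    ultimately show "z \<in> {u + w |u w. u \<in> Im_left V F p \<and> w \<in> Im_down V F p}"
      using q0 r0 vw by blast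
  qed
  show "{u + w |u w. u \<in> Im_left V F p \<and> w \<in> Im_down V F p} \<subseteq> V p"
    using Im_left_subset_stalk Im_down_subset_stalk subspace_stalk subspace_add by blast
qed

end

end

theorem lemma5p7:
  fixes scale :: "'k::field \<Rightarrow> 'v::ab_group_add \<Rightarrow> 'v"
    and V :: "'s::linorder \<times> 't::linorder \<Rightarrow> 'v set"
    and F :: "'s \<times> 't \<Rightarrow> 's \<times> 't \<Rightarrow> 'v \<Rightarrow> 'v"
  assumes "pfd_module scale V F"
    and "\<And>x x' y y'. x \<le> x' \<Longrightarrow> y \<le> y' \<Longrightarrow> square_exact V F x x' y y'"
  shows "(\<forall>p. ker_right V F p \<inter> ker_up V F p = {0}) \<and>
         (\<forall>p. V p = {u + w |u w. u \<in> Im_left V F p \<and> w \<in> Im_down V F p})"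
proof -
  interpret pfd_persistence_module scale V F by (rule pfd_persistence_module.intro) fact
  show ?thesis
    using ker_right_inter_ker_up stalk_eq_Im_left_plus_Im_down assms(2) by blast
qed

end
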